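(* Let $\mathcal{H}_A,\mathcal{H}_B$ be finite-dimensional Hilbert spaces and let $W_{AB}\in\mathcal{W}(\mathcal{H}_A\otimes\mathcal{H}_B)$ be a beyond quantum state. Then there exists a semiquantum game $\mathbb{G}_{sq}$ and a choice of local measurements $M_{AA^o}$, $N_{BB^o}$ such that the expected payoff obtained from $W_{AB}$ with these measurements is strictly negative, whereas for every density operator $\rho_{AB}\in\mathcal{D}(\mathcal{H}_A\otimes\mathcal{H}_B)$ and every choice of local measurements (POVMs on $\mathcal{H}_A\otimes\mathcal{H}_{A^o}$ and on $\mathcal{H}_B\otimes\mathcal{H}_{B^o}$ with outcome sets those of the game) the expected payoff is nonnegative. In short: $\mathcal{I}_{\mathbb{G}_{sq}}(W_{AB})<0$ while $\mathcal{I}_{\mathbb{G}_{sq}}(\rho_{AB})\ge 0$ for all $\rho_{AB}\in\mathcal{D}(\mathcal{H}_A\otimes\mathcal{H}_B)$.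
   Context: A POPT state on $\mathcal{H}_A\otimes\mathcal{H}_B$ is a Hermitian unit-trace operator $W$ with $\operatorname{Tr}[W(P\otimes Q)]\ge0$ for all positive semidefinite $P$ on $\mathcal{H}_A$, $Q$ on $\mathcal{H}_B$; the set of these is $\mathcal{W}(\mathcal{H}_A\otimes\mathcal{H}_B)$. $\mathcal{D}(\mathcal{H}_A\otimes\mathcal{H}_B)$ is the set of density operators. A beyond quantum state is an element of $\mathcal{W}\setminus\mathcal{D}$. A (bipartite) semiquantum game $\mathbb{G}_{sq}$ consists of finite-dimensional Hilbert spaces $\mathcal{H}_{A^o},\mathcal{H}_{B^o}$, finite families of pure states $\{\psi^s_{A^o}\}_{s\in\mathcal{S}_A}$ on $\mathcal{H}_{A^o}$ and $\{\psi^t_{B^o}\}_{t\in\mathcal{S}_B}$ on $\mathcal{H}_{B^o}$ (quantum inputs), finite output sets $\mathcal{O}_A,\mathcal{O}_B$, and a real payoff function $\beta:\mathcal{S}_A\times\mathcal{O}_A\times\mathcal{S}_B\times\mathcal{O}_B\to\mathbb{R}$. Given a (POPT or quantum) state $Z_{AB}$ and POVMs $M_{AA^o}=\{\pi^a_{AA^o}\}_{a\in\mathcal{O}_A}$ on $\mathcal{H}_A\otimes\mathcal{H}_{A^o}$ and $N_{BB^o}=\{\pi^b_{BB^o}\}_{b\in\mathcal{O}_B}$ on $\mathcal{H}_B\otimes\mathcal{H}_{B^o}$, the correlation is $p(a,b|\psi^s,\psi^t)=\operatorname{Tr}[(\pi^a_{AA^o}\otimes\pi^b_{BB^o})(\psi^s_{A^o}\otimes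 Z_{AB}\otimes\psi^t_{B^o})]$ (tensor factors reordered appropriately), and the expected payoff is $\mathcal{I}_{\mathbb{G}_{sq}}(Z_{AB})=\sum_{s,a,t,b}\beta(s,a,t,b)\,p(a,b|\psi^s,\psi^t)$. *)

theory Defs
  imports "Jordan_Normal_Form.Matrix" "Jordan_Normal_Form.Conjugate"
begin

(* Finite-dimensional Hilbert spaces are modelled as C^d; operators as complex d x d
   matrices (Jordan_Normal_Form).  The order on complex numbers is the one of
   HOL-Library.Complex_Order (z \<le> w iff Re z \<le> Re w and Im z = Im w). *)

definition mtrace :: "complex mat \<Rightarrow> complex" where
  "mtrace A = (\<Sum>i<dim_row A. A $$ (i, i))"

definition hermitian :: "nat \<Rightarrow> complex mat \<Rightarrow> bool" where
  "hermitian d A \<longleftrightarrow> A \<in> carrier_mat d d \<and> (\<forall>i<d. \<forall>j<d. A $$ (i, j) = cnj (A $$ (j, i)))"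

definition psd :: "nat \<Rightarrow> complex mat \<Rightarrow> bool" where
  "psd d A \<longleftrightarrow> hermitian d A \<and> (\<forall>v \<in> carrier_vec d. (A *\<^sub>v v) \<bullet>c v \<ge> 0)"

(* Kronecker (tensor) product; index of (i,j) is i * dim2 + j *)
definition kron :: "complex mat \<Rightarrow> complex mat \<Rightarrow> complex mat" where
  "kron A B = mat (dim_row A * dim_row B) (dim_col A * dim_col B)
     (\<lambda>(i, j). A $$ (i div dim_row B, j div dim_col B) * B $$ (i mod dim_row B, j mod dim_col B))"

definition density :: "nat \<Rightarrow> complex mat \<Rightarrow> bool" where
  "density d \<rho> \<longleftrightarrow> psd d \<rho> \<and> mtrace \<rho> = 1"

definition popt :: "nat \<Rightarrow> nat \<Rightarrow> complex mat \<Rightarrow> bool" where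
  "popt dA dB W \<longleftrightarrow> hermitian (dA * dB) W \<and> mtrace W = 1 \<and>
     (\<forall>P Q. psd dA P \<longrightarrow> psd dB Q \<longrightarrow> mtrace (W * kron P Q) \<ge> 0)"

definition pure_state :: "nat \<Rightarrow> complex mat \<Rightarrow> bool" where
  "pure_state d P \<longleftrightarrow> (\<exists>v \<in> carrier_vec d. v \<bullet>c v = 1 \<and>
      P = mat d d (\<lambda>(i, j). v $ i * cnj (v $ j)))"

definition povm :: "nat \<Rightarrow> nat \<Rightarrow> (nat \<Rightarrow> complex mat) \<Rightarrow> bool" where
  "povm d n E \<longleftrightarrow> (\<forall>a<n. psd d (E a)) \<and>
     (\<forall>i<d. \<forall>j<d. (\<Sum>a<n. E a $$ (i, j)) = (if i = j then 1 else 0))"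

(* The operator psi_s (on A^o) \<otimes> Z (on A\<otimes>B) \<otimes> psi_t (on B^o), with tensor factors
   reordered to (A \<otimes> A^o) \<otimes> (B \<otimes> B^o). *)
definition joint_state :: "nat \<Rightarrow> nat \<Rightarrow> nat \<Rightarrow> nat \<Rightarrow> complex mat \<Rightarrow> complex mat \<Rightarrow> complex mat \<Rightarrow> complex mat" where
  "joint_state dA dAo dB dBo psiA Z psiB =
     mat (dA * dAo * (dB * dBo)) (dA * dAo * (dB * dBo)) (\<lambda>(k, l).
       let k1 = k div (dB * dBo); k2 = k mod (dB * dBo);
           l1 = l div (dB * dBo); l2 = l mod (dB * dBo);
           a = k1 div dAo; ao = k1 mod dAo; b = k2 div dBo; bo = k2 mod dBo;
           a' = l1 div dAo; ao' = l1 mod dAo; b' = l2 div dBo; bo' = l2 mod dBo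
       in Z $$ (a * dB + b, a' * dB + b') * psiA $$ (ao, ao') * psiB $$ (bo, bo'))"

(* correlation p(a,b | psi^s, psi^t) = Tr[(pi^a \<otimes> pi^b)(psi^s \<otimes> Z \<otimes> psi^t)] (real part;
   it is real for PSD arguments) *)
definition correlation :: "nat \<Rightarrow> nat \<Rightarrow> nat \<Rightarrow> nat \<Rightarrow> complex mat \<Rightarrow> complex mat \<Rightarrow>
    complex mat \<Rightarrow> complex mat \<Rightarrow> complex mat \<Rightarrow> real" where
  "correlation dA dAo dB dBo piA piB psiA Z psiB =
     Re (mtrace (kron piA piB * joint_state dA dAo dB dBo psiA Z psiB))"

(* Semiquantum game: dims dAo, dBo; inputs psiA s (s < nSA), psiB t (t < nSB);
   outputs {..<nOA}, {..<nOB}; payoff beta. *)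
definition semiquantum_game :: "nat \<Rightarrow> nat \<Rightarrow> nat \<Rightarrow> nat \<Rightarrow> (nat \<Rightarrow> complex mat) \<Rightarrow> (nat \<Rightarrow> complex mat) \<Rightarrow> bool" where
  "semiquantum_game dAo dBo nSA nSB psiA psiB \<longleftrightarrow>
     (\<forall>s<nSA. pure_state dAo (psiA s)) \<and> (\<forall>t<nSB. pure_state dBo (psiB t))"

definition payoff :: "nat \<Rightarrow> nat \<Rightarrow> nat \<Rightarrow> nat \<Rightarrow> nat \<Rightarrow> nat \<Rightarrow> nat \<Rightarrow> nat \<Rightarrow>
    (nat \<Rightarrow> complex mat) \<Rightarrow> (nat \<Rightarrow> complex mat) \<Rightarrow> (nat \<Rightarrow> nat \<Rightarrow> nat \<Rightarrow> nat \<Rightarrow> real) \<Rightarrow>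
    (nat \<Rightarrow> complex mat) \<Rightarrow> (nat \<Rightarrow> complex mat) \<Rightarrow> complex mat \<Rightarrow> real" where
  "payoff dA dB dAo dBo nSA nSB nOA nOB psiA psiB beta M N Z =
     (\<Sum>s<nSA. \<Sum>a<nOA. \<Sum>t<nSB. \<Sum>b<nOB.
        beta s a t b * correlation dA dAo dB dBo (M a) (N b) (psiA s) Z (psiB t))"

end

theory Submission
  imports Defs
begin

text \<open>Being Hermitian of unit trace but not a density operator, \<open>W\<close> is not positive
  semidefinite: \<open>\<langle>v, W v\<rangle> < 0\<close> for some \<open>v\<close>. The quantum inputs of each player are the pure
  states \<open>|i\<rangle>\<close> and \<open>(|i\<rangle> + \<i>\<^sup>r |j\<rangle>) / sqrt 2\<close>, which are tomographically complete: suitable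
  complex weights \<open>c\<^sub>s\<close> combine them into any matrix unit \<open>|i\<rangle>\<langle>j|\<close>. Both players measure the
  projector onto the maximally entangled state against its complement, and the payoff rewards the
  outcome pair (entangled, entangled) on inputs \<open>(s, t)\<close> with \<open>Re (c\<^sub>s c\<^sub>t conj (v\<^sub>i\<^sub>k) v\<^sub>j\<^sub>l)\<close>.
  By linearity the expected payoff for a state \<open>Z\<close> and measurements \<open>M\<close>, \<open>N\<close> is then
  \<open>Re Tr ((M\<^sub>0 \<otimes> N\<^sub>0) (Z \<otimes> |conj v\<rangle>\<langle>conj v|))\<close>, tensor factors suitably reordered. For a
  density operator this is the trace of a product of two positive operators, hence nonnegative
  whatever the measurements; positive operators are handled through their Gram (Cholesky)
  decompositions. For the Bell measurements the teleportation identity turns it into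
  \<open>\<langle>v, W v\<rangle> / (dA dB) < 0\<close>.\<close>

section \<open>Positive semidefinite kernels are Gram kernels\<close>

definition quad_form :: "nat \<Rightarrow> (nat \<Rightarrow> nat \<Rightarrow> complex) \<Rightarrow> (nat \<Rightarrow> complex) \<Rightarrow> complex" where
  "quad_form n Q x = (\<Sum>i<n. \<Sum>j<n. cnj (x i) * Q i j * x j)"

definition hermitian_kernel :: "nat \<Rightarrow> (nat \<Rightarrow> nat \<Rightarrow> complex) \<Rightarrow> bool" where
  "hermitian_kernel n Q \<longleftrightarrow> (\<forall>i<n. \<forall>j<n. Q i j = cnj (Q j i))"

definition psd_kernel :: "nat \<Rightarrow> (nat \<Rightarrow> nat \<Rightarrow> complex) \<Rightarrow> bool" where
  "psd_kernel n Q \<longleftrightarrow> hermitian_kernel n Q \<and> (\<forall>x. Re (quad_form n Q x) \<ge> 0)"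

lemma hermitian_kernelD: "hermitian_kernel n Q \<Longrightarrow> i < n \<Longrightarrow> j < n \<Longrightarrow> Q i j = cnj (Q j i)"
  unfolding hermitian_kernel_def by blast

lemma psd_kernelD:
  assumes "psd_kernel n Q"
  shows "hermitian_kernel n Q" "Re (quad_form n Q x) \<ge> 0"
  using assms unfolding psd_kernel_def by auto

lemma sum_if_const: "(\<Sum>j\<in>A. if P then f j else 0) = (if P then sum f A else (0::'a::comm_monoid_add))"
  by simp

lemma quad_form_add_unit:
  assumes k: "k < n"
  shows "quad_form n Q (\<lambda>i. x i + (if i = k then t else 0)) =
     quad_form n Q x + cnj t * (\<Sum>j<n. Q k j * x j) + t * (\<Sum>i<n. cnj (x i) * Q i k) + cnj t * t * Q k k"
proof -
  have expand: "cnj (x i + (if i = k then t else 0)) * Q i j * (x j + (if j = k then t else 0)) =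
     cnj (x i) * Q i j * x j + (if j = k then cnj (x i) * Q i k * t else 0)
     + (if i = k then cnj t * Q k j * x j else 0) + (if i = k then (if j = k then cnj t * Q k k * t else 0) else 0)"
    for i j by (auto simp: algebra_simps)
  show ?thesis unfolding quad_form_def expand sum.distrib using k
    by (simp add: sum_if_const sum.delta sum_distrib_left sum_distrib_right mult_ac)
qed

lemma quad_form_unit: "k < n \<Longrightarrow> quad_form n Q (\<lambda>i. if i = k then 1 else 0) = Q k k"
  using quad_form_add_unit[of k n Q "\<lambda>i. 0" 1] by (simp add: quad_form_def)

lemma psd_kernel_diag:
  assumes "psd_kernel n Q" "k < n"
  shows "Q k k = complex_of_real (Re (Q k k))" "Re (Q k k) \<ge> 0"
proof -
  have "Q k k = cnj (Q k k)" using hermitian_kernelD[OF psd_kernelD(1)[OF assms(1)] assms(2,2)] .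
  then show "Q k k = complex_of_real (Re (Q k k))" by (simp add: complex_eq_iff)
  show "Re (Q k k) \<ge> 0" using psd_kernelD(2)[OF assms(1)] quad_form_unit[OF assms(2)] by metis
qed

text \<open>If \<open>Q\<^sub>k\<^sub>j \<noteq> 0\<close>, the form is negative at \<open>e\<^sub>j - s Q\<^sub>k\<^sub>j e\<^sub>k\<close> for large \<open>s\<close>.\<close>

lemma psd_kernel_zero_diag:
  assumes Q: "psd_kernel n Q" and k: "k < n" and zero: "Q k k = 0" and j: "j < n"
  shows "Q k j = 0"
proof (rule ccontr)
  assume nz: "Q k j \<noteq> 0"
  define s where "s = (Re (Q j j) + 1) / (cmod (Q k j))\<^sup>2"
  define t where "t = - complex_of_real s * Q k j"
  define x where "x = (\<lambda>i. if i = j then 1 else (0::complex))"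
  have form: "quad_form n Q (\<lambda>i. x i + (if i = k then t else 0)) = Q j j + cnj t * Q k j + t * Q j k"
  proof -
    have "(\<Sum>l<n. Q k l * x l) = (\<Sum>l<n. if l = j then Q k l else 0)"
      by (rule sum.cong) (simp_all add: x_def)
    moreover have "(\<Sum>i<n. cnj (x i) * Q i k) = (\<Sum>i<n. if i = j then Q i k else 0)"
      by (rule sum.cong) (simp_all add: x_def)
    moreover have "x k = 0" using nz zero unfolding x_def by auto
    ultimately show ?thesis
      using quad_form_add_unit[OF k, of Q x t] quad_form_unit[OF j, of Q, folded x_def] zero j by simp
  qed
  have "cnj (Q k j) * Q k j = complex_of_real ((cmod (Q k j))\<^sup>2)"
    by (metis complex_norm_square mult.commute)
  then have "cnj t * Q k j = - complex_of_real (s * (cmod (Q k j))\<^sup>2)"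
    unfolding t_def by simp
  also have "s * (cmod (Q k j))\<^sup>2 = Re (Q j j) + 1" unfolding s_def using nz by simp
  finally have "cnj t * Q k j = - complex_of_real (Re (Q j j) + 1)" .
  moreover have "t * Q j k = cnj (cnj t * Q k j)"
    using hermitian_kernelD[OF psd_kernelD(1)[OF Q] j k] by simp
  ultimately have "Re (quad_form n Q (\<lambda>i. x i + (if i = k then t else 0))) = - Re (Q j j) - 2"
    unfolding form by simp
  moreover have "Re (quad_form n Q (\<lambda>i. x i + (if i = k then t else 0))) \<ge> 0"
    using psd_kernelD(2)[OF Q] .
  ultimately show False using psd_kernel_diag(2)[OF Q j] by linarith
qed

text \<open>Completing the square at the pivot \<open>k\<close>.\<close>

lemma quad_form_schur_complement:
  assumes Q: "hermitian_kernel n Q" and k: "k < n" and real: "Q k k = complex_of_real c" and c: "c \<noteq> 0"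
  shows "quad_form n (\<lambda>i j. Q i j - Q i k * Q k j / Q k k) x
       = quad_form n Q (\<lambda>i. x i + (if i = k then - (\<Sum>j<n. Q k j * x j) / Q k k else 0))"
proof -
  define s where "s = (\<Sum>j<n. Q k j * x j)"
  have cnj_s: "(\<Sum>i<n. cnj (x i) * Q i k) = cnj s"
    unfolding s_def by (auto simp: hermitian_kernelD[OF Q _ k] intro!: sum.cong)
  have "quad_form n (\<lambda>i j. Q i j - Q i k * Q k j / Q k k) x
     = quad_form n Q x - (\<Sum>i<n. cnj (x i) * Q i k) * (\<Sum>j<n. Q k j * x j) / Q k k"
    unfolding quad_form_def
    by (simp add: algebra_simps sum_subtractf sum_distrib_left sum_distrib_right sum_divide_distrib)
  also have "\<dots> = quad_form n Q x - cnj s * s / Q k k" unfolding cnj_s s_def ..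
  finally have lhs: "quad_form n (\<lambda>i j. Q i j - Q i k * Q k j / Q k k) x = quad_form n Q x - cnj s * s / Q k k" .
  have rhs: "quad_form n Q (\<lambda>i. x i + (if i = k then - s / Q k k else 0))
     = quad_form n Q x + cnj (- s / Q k k) * s + (- s / Q k k) * cnj s + cnj (- s / Q k k) * (- s / Q k k) * Q k k"
    using quad_form_add_unit[OF k, of Q x "- s / Q k k"] unfolding cnj_s s_def by simp
  show ?thesis unfolding s_def[symmetric] lhs rhs using c unfolding real
    by (simp add: field_simps power2_eq_square)
qed

lemma psd_kernel_schur_complement:
  assumes Q: "psd_kernel n Q" and k: "k < n" and pivot: "Q k k \<noteq> 0"
  shows "psd_kernel n (\<lambda>i j. Q i j - Q i k * Q k j / Q k k)"
proof -
  have H: "hermitian_kernel n Q" using psd_kernelD(1)[OF Q] .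
  have real: "Q k k = complex_of_real (Re (Q k k))" using psd_kernel_diag(1)[OF Q k] .
  then have c: "Re (Q k k) \<noteq> 0" using pivot by (metis of_real_0)
  show ?thesis
    unfolding psd_kernel_def hermitian_kernel_def
  proof (intro conjI allI impI)
    fix x
    show "Re (quad_form n (\<lambda>i j. Q i j - Q i k * Q k j / Q k k) x) \<ge> 0"
      unfolding quad_form_schur_complement[OF H k real c] using psd_kernelD(2)[OF Q] .
  next
    fix i j assume ij: "i < n" "j < n"
    have "cnj (Q j i - Q j k * Q k i / Q k k) = cnj (Q j i) - cnj (Q j k) * cnj (Q k i) / cnj (Q k k)"
      by simp
    also have "\<dots> = Q i j - Q k j * Q i k / Q k k"
      using hermitian_kernelD[OF H ij] hermitian_kernelD[OF H ij(2) k] hermitian_kernelD[OF H k ij(1)]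
        hermitian_kernelD[OF H k k] by simp
    finally show "Q i j - Q i k * Q k j / Q k k = cnj (Q j i - Q j k * Q k i / Q k k)"
      by (simp add: mult.commute)
  qed
qed

text \<open>One step of a Cholesky factorisation.\<close>

lemma psd_kernel_split_rank_one:
  assumes Q: "psd_kernel n Q" and k: "k < n"
    and supp: "\<And>i j. i < n \<Longrightarrow> j < n \<Longrightarrow> i < k \<or> j < k \<Longrightarrow> Q i j = 0"
  obtains Q' c where "psd_kernel n Q'"
    "\<And>i j. i < n \<Longrightarrow> j < n \<Longrightarrow> i < Suc k \<or> j < Suc k \<Longrightarrow> Q' i j = 0"
    "\<And>i j. i < n \<Longrightarrow> j < n \<Longrightarrow> Q i j = Q' i j + c i * cnj (c j)"
proof (cases "Q k k = 0")
  case True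
  have row: "Q k j = 0" if "j < n" for j using psd_kernel_zero_diag[OF Q k True that] .
  have col: "Q j k = 0" if "j < n" for j
    using hermitian_kernelD[OF psd_kernelD(1)[OF Q] that k] row[OF that] by simp
  have "Q i j = 0" if "i < n" "j < n" "i < Suc k \<or> j < Suc k" for i j
    using that supp[of i j] row col by (auto simp: less_Suc_eq)
  with Q show thesis by (intro that[of Q "\<lambda>_. 0"]) auto
next
  case False
  define c where "c = Re (Q k k)"
  have real: "Q k k = complex_of_real c" unfolding c_def using psd_kernel_diag(1)[OF Q k] .
  have "c \<noteq> 0" using False real by (metis of_real_0)
  then have "c > 0" using psd_kernel_diag(2)[OF Q k] unfolding c_def by linarith
  have rank_one: "Q i k * Q k j / Q k k = (Q i k / sqrt c) * cnj (Q j k / sqrt c)" if "j < n" for i j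
  proof -
    have "cnj (Q j k) = Q k j" using hermitian_kernelD[OF psd_kernelD(1)[OF Q] k \<open>j < n\<close>] by simp
    moreover have "complex_of_real (sqrt c) * complex_of_real (sqrt c) = complex_of_real c"
      using \<open>c > 0\<close> by (simp flip: of_real_mult)
    ultimately show ?thesis unfolding real by simp
  qed
  show thesis
  proof (rule that[of "\<lambda>i j. Q i j - Q i k * Q k j / Q k k" "\<lambda>i. Q i k / sqrt c"])
    show "psd_kernel n (\<lambda>i j. Q i j - Q i k * Q k j / Q k k)"
      using psd_kernel_schur_complement[OF Q k False] .
  next
    fix i j assume "i < n" "j < n" "i < Suc k \<or> j < Suc k"
    then show "Q i j - Q i k * Q k j / Q k k = 0"
      using supp[of i j] supp[of i k] supp[of k j] k False by (auto simp: less_Suc_eq)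
  next
    fix i j assume "i < n" "j < n"
    then show "Q i j = Q i j - Q i k * Q k j / Q k k + Q i k / sqrt c * cnj (Q j k / sqrt c)"
      using rank_one by simp
  qed
qed

lemma psd_kernel_gram:
  assumes "psd_kernel n Q"
  obtains N :: nat and w where "\<And>i j. i < n \<Longrightarrow> j < n \<Longrightarrow> Q i j = (\<Sum>m<N. w m i * cnj (w m j))"
proof -
  have "\<exists>(N::nat) w. \<forall>i<n. \<forall>j<n. Q i j = (\<Sum>m<N. w m i * cnj (w m j))"
    if "psd_kernel n Q" "\<And>i j. i < n \<Longrightarrow> j < n \<Longrightarrow> i < k \<or> j < k \<Longrightarrow> Q i j = 0" for k Q
    using that
  proof (induction "n - k" arbitrary: k Q)
    case 0
    then have "\<forall>i<n. \<forall>j<n. Q i j = 0" by auto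
    then show ?case by (rule_tac x=0 in exI) simp
  next
    case (Suc r)
    then have "k < n" by simp
    obtain Q' c where Q': "psd_kernel n Q'"
      "\<And>i j. i < n \<Longrightarrow> j < n \<Longrightarrow> i < Suc k \<or> j < Suc k \<Longrightarrow> Q' i j = 0"
      and split: "\<And>i j. i < n \<Longrightarrow> j < n \<Longrightarrow> Q i j = Q' i j + c i * cnj (c j)"
      using psd_kernel_split_rank_one[OF Suc.prems(1) \<open>k < n\<close> Suc.prems(2)] by blast
    have "r = n - Suc k" using Suc.hyps(2) by arith
    then obtain N :: nat and w where w: "\<forall>i<n. \<forall>j<n. Q' i j = (\<Sum>m<N. w m i * cnj (w m j))"
      using Suc.hyps(1)[OF _ Q'(1,2)] by blast
    have "\<forall>i<n. \<forall>j<n. Q i j = (\<Sum>m<Suc N. (w(N := c)) m i * cnj ((w(N := c)) m j))"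
      using w split by simp
    then show ?case by blast
  qed
  from this[of Q 0] assms that show thesis by auto
qed

lemma trace_gram_product_nonneg:
  fixes u :: "'p \<Rightarrow> nat \<Rightarrow> complex" and z :: "'m \<Rightarrow> nat \<Rightarrow> complex"
  assumes P: "\<And>K L. K < D \<Longrightarrow> L < D \<Longrightarrow> P K L = (\<Sum>p\<in>I. u p K * cnj (u p L))"
    and Q: "\<And>K L. K < D \<Longrightarrow> L < D \<Longrightarrow> Q K L = (\<Sum>m\<in>J. z m K * cnj (z m L))"
  shows "Re (\<Sum>K<D. \<Sum>L<D. P K L * Q L K) \<ge> 0"
proof -
  define f where "f = (\<lambda>K L p m. u p K * cnj (z m K) * (cnj (u p L) * z m L))"
  have "(\<Sum>K<D. \<Sum>L<D. P K L * Q L K) = (\<Sum>K<D. \<Sum>L<D. \<Sum>p\<in>I. \<Sum>m\<in>J. f K L p m)"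
    using P Q unfolding f_def
    by (auto intro!: sum.cong simp: sum_distrib_left sum_distrib_right mult_ac)
  also have "\<dots> = (\<Sum>K<D. \<Sum>p\<in>I. \<Sum>L<D. \<Sum>m\<in>J. f K L p m)"
    by (rule sum.cong[OF refl], rule sum.swap)
  also have "\<dots> = (\<Sum>p\<in>I. \<Sum>K<D. \<Sum>L<D. \<Sum>m\<in>J. f K L p m)"
    by (rule sum.swap)
  also have "\<dots> = (\<Sum>p\<in>I. \<Sum>K<D. \<Sum>m\<in>J. \<Sum>L<D. f K L p m)"
    by (intro sum.cong refl, rule sum.swap)
  also have "\<dots> = (\<Sum>p\<in>I. \<Sum>m\<in>J. \<Sum>K<D. \<Sum>L<D. f K L p m)"
    by (intro sum.cong refl, rule sum.swap)
  also have "\<dots> = (\<Sum>p\<in>I. \<Sum>m\<in>J. (\<Sum>K<D. u p K * cnj (z m K)) * cnj (\<Sum>K<D. u p K * cnj (z m K)))"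
    unfolding f_def by (simp add: sum_product mult_ac)
  finally have expansion: "(\<Sum>K<D. \<Sum>L<D. P K L * Q L K) = \<dots>" .
  have "Re (a * cnj a) \<ge> 0" for a :: complex by (simp add: add_nonneg_nonneg)
  then show ?thesis unfolding expansion Re_sum by (intro sum_nonneg)
qed

abbreviation (input) mat_kernel :: "complex mat \<Rightarrow> nat \<Rightarrow> nat \<Rightarrow> complex" where
  "mat_kernel M \<equiv> \<lambda>i j. M $$ (i, j)"

lemma quad_form_mat:
  assumes "M \<in> carrier_mat n n" "v \<in> carrier_vec n"
  shows "(M *\<^sub>v v) \<bullet>c v = quad_form n (mat_kernel M) (\<lambda>i. v $ i)"
proof -
  have "(M *\<^sub>v v) \<bullet>c v = (\<Sum>i<n. (\<Sum>j<n. M $$ (i, j) * v $ j) * cnj (v $ i))"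
    using assms by (auto simp: scalar_prod_def atLeast0LessThan intro!: sum.cong)
  also have "\<dots> = quad_form n (mat_kernel M) (\<lambda>i. v $ i)"
    unfolding quad_form_def by (simp add: sum_distrib_right sum_distrib_left mult_ac)
  finally show ?thesis .
qed

lemma quad_form_real:
  assumes "hermitian_kernel n Q"
  shows "Im (quad_form n Q x) = 0"
proof -
  have "cnj (quad_form n Q x) = (\<Sum>i<n. \<Sum>j<n. x i * cnj (Q i j) * cnj (x j))"
    unfolding quad_form_def by simp
  also have "\<dots> = (\<Sum>i<n. \<Sum>j<n. x i * Q j i * cnj (x j))"
  proof (intro sum.cong refl)
    fix i j assume "i \<in> {..<n}" "j \<in> {..<n}"
    then have "cnj (Q i j) = Q j i" using hermitian_kernelD[OF assms, of j i] by simp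
    then show "x i * cnj (Q i j) * cnj (x j) = x i * Q j i * cnj (x j)" by simp
  qed
  also have "\<dots> = quad_form n Q x"
    unfolding quad_form_def by (subst sum.swap) (simp add: mult_ac)
  finally show ?thesis by (simp add: complex_eq_iff)
qed

lemma psd_iff_psd_kernel: "psd n M \<longleftrightarrow> M \<in> carrier_mat n n \<and> psd_kernel n (mat_kernel M)"
proof
  assume M: "psd n M"
  then have carrier: "M \<in> carrier_mat n n" and "hermitian_kernel n (mat_kernel M)"
    unfolding psd_def hermitian_def hermitian_kernel_def by blast+
  moreover have "Re (quad_form n (mat_kernel M) x) \<ge> 0" for x
  proof -
    have "vec n x \<in> carrier_vec n" by simp
    with M have "(M *\<^sub>v vec n x) \<bullet>c vec n x \<ge> 0" unfolding psd_def by blast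
    moreover have "(M *\<^sub>v vec n x) \<bullet>c vec n x = quad_form n (mat_kernel M) (\<lambda>i. vec n x $ i)"
      by (rule quad_form_mat[OF carrier]) simp
    moreover have "\<dots> = quad_form n (mat_kernel M) x"
      unfolding quad_form_def by (auto intro!: sum.cong)
    ultimately show ?thesis by (simp add: less_eq_complex_def)
  qed
  ultimately show "M \<in> carrier_mat n n \<and> psd_kernel n (mat_kernel M)"
    unfolding psd_kernel_def by blast
next
  assume "M \<in> carrier_mat n n \<and> psd_kernel n (mat_kernel M)"
  then have carrier: "M \<in> carrier_mat n n" and H: "hermitian_kernel n (mat_kernel M)"
    and pos: "\<And>x. Re (quad_form n (mat_kernel M) x) \<ge> 0"
    unfolding psd_kernel_def by blast+
  show "psd n M"
    unfolding psd_def hermitian_def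
  proof (intro conjI ballI)
    show "M \<in> carrier_mat n n" by fact
    show "\<forall>i<n. \<forall>j<n. M $$ (i, j) = cnj (M $$ (j, i))" using H unfolding hermitian_kernel_def .
    fix v :: "complex vec" assume "v \<in> carrier_vec n"
    then have "(M *\<^sub>v v) \<bullet>c v = quad_form n (mat_kernel M) (\<lambda>i. v $ i)"
      by (rule quad_form_mat[OF carrier])
    then show "(M *\<^sub>v v) \<bullet>c v \<ge> 0"
      using pos quad_form_real[OF H] by (simp add: less_eq_complex_def)
  qed
qed

lemma not_density_imp_negative_direction:
  assumes "hermitian n W" "mtrace W = 1" "\<not> density n W"
  obtains v where "Re (quad_form n (mat_kernel W) v) < 0"
proof -
  have "\<not> psd n W" using assms(2,3) unfolding density_def by blast
  then have "\<not> psd_kernel n (mat_kernel W)"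
    using assms(1) unfolding psd_iff_psd_kernel hermitian_def by blast
  moreover have "hermitian_kernel n (mat_kernel W)"
    using assms(1) unfolding hermitian_def hermitian_kernel_def by blast
  ultimately obtain v where "\<not> Re (quad_form n (mat_kernel W) v) \<ge> 0"
    unfolding psd_kernel_def by blast
  then have "Re (quad_form n (mat_kernel W) v) < 0" by simp
  then show thesis by (rule that)
qed

section \<open>Coordinates of the correlation\<close>

lemma sum_lessThan_mult:
  fixes f :: "nat \<Rightarrow> 'a::comm_monoid_add"
  shows "(\<Sum>k<m * n. f k) = (\<Sum>i<m. \<Sum>j<n. f (i * n + j))"
proof -
  have "(\<Sum>k<m * n. f k) = (\<Sum>i<m. sum f {i * n..<i * n + n})" by (rule sum.nat_group[symmetric])
  also have "\<dots> = (\<Sum>i<m. \<Sum>j<n. f (i * n + j))"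
  proof (rule sum.cong[OF refl])
    fix i
    have "sum f {i * n..<i * n + n} = sum f {0 + i * n..<n + i * n}" by (simp add: add.commute)
    also have "\<dots> = (\<Sum>j = 0..<n. f (j + i * n))" by (rule sum.shift_bounds_nat_ivl)
    finally show "sum f {i * n..<i * n + n} = (\<Sum>j<n. f (i * n + j))"
      by (simp add: atLeast0LessThan add.commute)
  qed
  finally show ?thesis .
qed

lemma mult_add_div_mod:
  fixes i j n :: nat
  assumes "j < n"
  shows "(i * n + j) div n = i" "(i * n + j) mod n = j"
  using assms by simp_all

lemma mult_add_less: "x < (a::nat) \<Longrightarrow> y < b \<Longrightarrow> x * b + y < a * b"
proof -
  assume "x < a" "y < b"
  then have "x * b + y < (x + 1) * b" by simp
  also have "\<dots> \<le> a * b" using \<open>x < a\<close> by (intro mult_right_mono) auto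
  finally show ?thesis .
qed

text \<open>A basis index \<open>L < dA * dA * (dB * dB)\<close> of \<open>(A \<otimes> A\<^sup>o) \<otimes> (B \<otimes> B\<^sup>o)\<close>, with
  \<open>A\<^sup>o = A\<close> and \<open>B\<^sup>o = B\<close>, is decoded into its index on \<open>A \<otimes> B\<close> and its indices on the
  two ancillas.\<close>

definition ab_index :: "nat \<Rightarrow> nat \<Rightarrow> nat \<Rightarrow> nat" where
  "ab_index dA dB L = L div (dB * dB) div dA * dB + L mod (dB * dB) div dB"

definition ao_index :: "nat \<Rightarrow> nat \<Rightarrow> nat \<Rightarrow> nat" where
  "ao_index dA dB L = L div (dB * dB) mod dA"

definition bo_index :: "nat \<Rightarrow> nat \<Rightarrow> nat" where
  "bo_index dB L = L mod (dB * dB) mod dB"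

definition joint_index :: "nat \<Rightarrow> nat \<Rightarrow> nat \<Rightarrow> nat \<Rightarrow> nat \<Rightarrow> nat \<Rightarrow> nat" where
  "joint_index dA dB a ao b bo = (a * dA + ao) * (dB * dB) + (b * dB + bo)"

lemma joint_index_decode:
  assumes "a < dA" "ao < dA" "b < dB" "bo < dB"
  shows "joint_index dA dB a ao b bo div (dB * dB) = a * dA + ao"
    and "joint_index dA dB a ao b bo mod (dB * dB) = b * dB + bo"
    and "ab_index dA dB (joint_index dA dB a ao b bo) = a * dB + b"
    and "ao_index dA dB (joint_index dA dB a ao b bo) = ao"
    and "bo_index dB (joint_index dA dB a ao b bo) = bo"
proof -
  have less: "b * dB + bo < dB * dB" using mult_add_less[OF assms(3,4)] .
  show div: "joint_index dA dB a ao b bo div (dB * dB) = a * dA + ao"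
    and mod: "joint_index dA dB a ao b bo mod (dB * dB) = b * dB + bo"
    unfolding joint_index_def using less by (simp_all only: mult_add_div_mod)
  show "ab_index dA dB (joint_index dA dB a ao b bo) = a * dB + b"
    "ao_index dA dB (joint_index dA dB a ao b bo) = ao" "bo_index dB (joint_index dA dB a ao b bo) = bo"
    unfolding ab_index_def ao_index_def bo_index_def div mod using assms by (simp_all only: mult_add_div_mod)
qed

lemma sum_joint_index:
  fixes F :: "nat \<Rightarrow> 'a::comm_monoid_add"
  shows "(\<Sum>K<dA * dA * (dB * dB). F K) = (\<Sum>a<dA. \<Sum>ao<dA. \<Sum>b<dB. \<Sum>bo<dB. F (joint_index dA dB a ao b bo))"
  unfolding joint_index_def by (simp only: sum_lessThan_mult)

lemma mtrace_mult:
  assumes "X \<in> carrier_mat n n" "Y \<in> carrier_mat n n"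
  shows "mtrace (X * Y) = (\<Sum>K<n. \<Sum>L<n. X $$ (K, L) * Y $$ (L, K))"
  using assms unfolding mtrace_def by (simp add: scalar_prod_def atLeast0LessThan)

lemma kron_index:
  assumes "A \<in> carrier_mat n1 n1" "B \<in> carrier_mat n2 n2" "K < n1 * n2" "L < n1 * n2"
  shows "kron A B $$ (K, L) = A $$ (K div n2, L div n2) * B $$ (K mod n2, L mod n2)"
  using assms unfolding kron_def by simp

lemma correlation_coords:
  assumes A: "A \<in> carrier_mat (dA * dA) (dA * dA)" and B: "B \<in> carrier_mat (dB * dB) (dB * dB)"
  shows "correlation dA dA dB dB A B psiA Z psiB =
    Re (\<Sum>K<dA * dA * (dB * dB). \<Sum>L<dA * dA * (dB * dB).
       (A $$ (K div (dB * dB), L div (dB * dB)) * B $$ (K mod (dB * dB), L mod (dB * dB))) *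
       (Z $$ (ab_index dA dB L, ab_index dA dB K) * psiA $$ (ao_index dA dB L, ao_index dA dB K)
          * psiB $$ (bo_index dB L, bo_index dB K)))"
proof -
  have "kron A B \<in> carrier_mat (dA * dA * (dB * dB)) (dA * dA * (dB * dB))"
    using A B unfolding kron_def by auto
  moreover have "joint_state dA dA dB dB psiA Z psiB \<in> carrier_mat (dA * dA * (dB * dB)) (dA * dA * (dB * dB))"
    unfolding joint_state_def by auto
  ultimately show ?thesis
    unfolding correlation_def
    by (auto simp: mtrace_mult kron_index[OF A B] joint_state_def Let_def ab_index_def ao_index_def
        bo_index_def intro!: arg_cong[where f = Re] sum.cong)
qed

section \<open>Tomographically complete probe states\<close>

definition probe_vec :: "nat \<Rightarrow> nat \<Rightarrow> nat \<Rightarrow> nat \<Rightarrow> complex" where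
  "probe_vec i j r a = (if i = j then (if a = i then 1 else 0)
     else ((if a = i then 1 else 0) + \<i> ^ r * (if a = j then 1 else 0)) / complex_of_real (sqrt 2))"

definition probe_coeff :: "nat \<Rightarrow> nat \<Rightarrow> nat \<Rightarrow> complex" where
  "probe_coeff i j r = (if i = j then 1 / 4 else \<i> ^ r / 2)"

lemma sum_lessThan_4: "(\<Sum>r<(4::nat). f r) = f 0 + f 1 + f 2 + (f 3 :: 'a::comm_monoid_add)"
  by (simp add: eval_nat_numeral add.assoc)

lemma probe_coeff_resolution:
  "(\<Sum>r<4. probe_coeff i j r * (probe_vec i j r a * cnj (probe_vec i j r b))) = (if a = i \<and> b = j then 1 else 0)"
proof -
  have sqrt2: "complex_of_real (sqrt 2) * complex_of_real (sqrt 2) = 2" by (simp flip: of_real_mult)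
  show ?thesis
    unfolding probe_coeff_def probe_vec_def sum_lessThan_4
    by (cases "i = j") (auto simp: field_simps sqrt2 power3_eq_cube)
qed

lemma probe_vec_norm:
  assumes "i < d" "j < d"
  shows "(\<Sum>a<d. probe_vec i j r a * cnj (probe_vec i j r a)) = 1"
proof (cases "i = j")
  case True
  then have "probe_vec i j r a * cnj (probe_vec i j r a) = (if a = i then 1 else 0)" for a
    by (simp add: probe_vec_def)
  then show ?thesis using assms by simp
next
  case False
  have sqrt2: "complex_of_real (sqrt 2) * complex_of_real (sqrt 2) = 2" by (simp flip: of_real_mult)
  have "\<i> ^ r * cnj (\<i> ^ r) = (\<i> * cnj \<i>) ^ r" by (simp only: power_mult_distrib complex_cnj_power)
  then have unit: "\<i> ^ r * cnj (\<i> ^ r) = 1" by simp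
  have "probe_vec i j r a * cnj (probe_vec i j r a) = (if a = i then 1/2 else 0) + (if a = j then 1/2 else 0)" for a
    using False unit sqrt2 by (auto simp: probe_vec_def field_simps)
  then show ?thesis using assms by (simp add: sum.distrib)
qed

text \<open>Input \<open>s < d * d * 4\<close> encodes the probe with parameters \<open>(i, j, r)\<close> as \<open>s = (i * d + j) * 4 + r\<close>.\<close>

definition probe :: "nat \<Rightarrow> nat \<Rightarrow> nat \<Rightarrow> complex" where
  "probe d s = probe_vec (s div 4 div d) (s div 4 mod d) (s mod 4)"

definition probe_weight :: "nat \<Rightarrow> nat \<Rightarrow> complex" where
  "probe_weight d s = probe_coeff (s div 4 div d) (s div 4 mod d) (s mod 4)"

definition probe_state :: "nat \<Rightarrow> nat \<Rightarrow> complex mat" where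
  "probe_state d s = mat d d (\<lambda>(a, b). probe d s a * cnj (probe d s b))"

lemma pure_state_probe_state:
  assumes s: "s < d * d * 4"
  shows "pure_state d (probe_state d s)"
proof -
  have "0 < d" using s by (cases d) auto
  then have i: "s div 4 div d < d" and j: "s div 4 mod d < d"
    using s by (auto simp: less_mult_imp_div_less mult.commute)
  have "vec d (probe d s) \<bullet>c vec d (probe d s) = (\<Sum>a<d. probe d s a * cnj (probe d s a))"
    unfolding scalar_prod_def by (simp add: atLeast0LessThan)
  also have "\<dots> = 1" unfolding probe_def by (rule probe_vec_norm[OF i j])
  finally have "vec d (probe d s) \<bullet>c vec d (probe d s) = 1" .
  moreover have "probe_state d s = mat d d (\<lambda>(i, j). vec d (probe d s) $ i * cnj (vec d (probe d s) $ j))"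
    unfolding probe_state_def by (rule eq_matI) auto
  ultimately show ?thesis unfolding pure_state_def by (intro bexI[of _ "vec d (probe d s)"]) auto
qed

lemma cnj_probe_state: "a < d \<Longrightarrow> b < d \<Longrightarrow> cnj (probe_state d s $$ (a, b)) = probe_state d s $$ (b, a)"
  unfolding probe_state_def by (simp add: mult.commute)

lemma probe_state_expansion:
  assumes a: "a < d" and b: "b < d"
  shows "(\<Sum>s<d * d * 4. F (s div 4 div d) (s div 4 mod d) * (probe_weight d s * probe_state d s $$ (a, b))) = F a b"
proof -
  have "(\<Sum>s<d * d * 4. F (s div 4 div d) (s div 4 mod d) * (probe_weight d s * probe_state d s $$ (a, b)))
     = (\<Sum>i<d. \<Sum>j<d. \<Sum>r<4. F i j * (probe_coeff i j r * (probe_vec i j r a * cnj (probe_vec i j r b))))"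
    unfolding sum_lessThan_mult
  proof (intro sum.cong refl)
    fix i j r assume "i \<in> {..<d}" "j \<in> {..<d}" "r \<in> {..<(4::nat)}"
    then have "((i * d + j) * 4 + r) div 4 div d = i" "((i * d + j) * 4 + r) div 4 mod d = j"
      "((i * d + j) * 4 + r) mod 4 = r" by (simp_all only: mult_add_div_mod lessThan_iff)
    then show "F (((i * d + j) * 4 + r) div 4 div d) (((i * d + j) * 4 + r) div 4 mod d)
         * (probe_weight d ((i * d + j) * 4 + r) * probe_state d ((i * d + j) * 4 + r) $$ (a, b))
       = F i j * (probe_coeff i j r * (probe_vec i j r a * cnj (probe_vec i j r b)))"
      unfolding probe_state_def probe_def probe_weight_def using a b by simp
  qed
  also have "\<dots> = (\<Sum>i<d. \<Sum>j<d. F i j * (if a = i \<and> b = j then 1 else 0))"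
    by (simp add: sum_distrib_left[symmetric] probe_coeff_resolution)
  also have "\<dots> = (\<Sum>i<d. if i = a then F i b else 0)"
    using b by (intro sum.cong refl) (auto simp: if_distrib sum.delta cong: if_cong)
  also have "\<dots> = F a b" using a by simp
  finally show ?thesis .
qed

section \<open>The Bell measurement\<close>

text \<open>The maximally entangled vector \<open>(1 / sqrt d) \<Sum>\<^sub>a |a\<rangle> \<otimes> |a\<rangle>\<close> of \<open>\<complex>\<^sup>d \<otimes> \<complex>\<^sup>d\<close>.\<close>

definition bell_vec :: "nat \<Rightarrow> nat \<Rightarrow> complex" where
  "bell_vec d x = (if x div d = x mod d then complex_of_real (1 / sqrt (real d)) else 0)"

definition bell_proj :: "nat \<Rightarrow> complex mat" where
  "bell_proj d = mat (d * d) (d * d) (\<lambda>(x, y). bell_vec d x * cnj (bell_vec d y))"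

definition bell_povm :: "nat \<Rightarrow> nat \<Rightarrow> complex mat" where
  "bell_povm d a = (if a = 0 then bell_proj d else 1\<^sub>m (d * d) - bell_proj d)"

lemma cnj_bell_vec [simp]: "cnj (bell_vec d x) = bell_vec d x"
  unfolding bell_vec_def by simp

lemma bell_povm_0_index:
  "x < d * d \<Longrightarrow> y < d * d \<Longrightarrow> bell_povm d 0 $$ (x, y) = bell_vec d x * bell_vec d y"
  unfolding bell_povm_def bell_proj_def by simp

lemma bell_vec_index:
  "a < d \<Longrightarrow> ao < d \<Longrightarrow> bell_vec d (a * d + ao) = (if ao = a then complex_of_real (1 / sqrt (real d)) else 0)"
  unfolding bell_vec_def by (simp only: mult_add_div_mod eq_commute[of a ao])

lemma bell_vec_norm:
  assumes "0 < d"
  shows "(\<Sum>x<d * d. cnj (bell_vec d x) * bell_vec d x) = 1"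
proof -
  have sq: "complex_of_real (1 / sqrt (real d)) * complex_of_real (1 / sqrt (real d)) = complex_of_real (1 / real d)"
    using assms by (simp flip: of_real_mult)
  have "(\<Sum>x<d * d. cnj (bell_vec d x) * bell_vec d x)
      = (\<Sum>a<d. \<Sum>ao<d. if ao = a then complex_of_real (1 / real d) else 0)"
    unfolding sum_lessThan_mult
  proof (intro sum.cong refl)
    fix a ao assume "a \<in> {..<d}" "ao \<in> {..<d}"
    then have "a < d" "ao < d" by simp_all
    then show "cnj (bell_vec d (a * d + ao)) * bell_vec d (a * d + ao)
        = (if ao = a then complex_of_real (1 / real d) else 0)"
      unfolding bell_vec_index[OF \<open>a < d\<close> \<open>ao < d\<close>] using sq by simp
  qed
  also have "\<dots> = (\<Sum>a<d. complex_of_real (1 / real d))" by (simp add: sum.delta)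
  also have "\<dots> = 1" using assms by simp
  finally show ?thesis .
qed

lemma psd_bell_proj: "psd (d * d) (bell_proj d)"
  unfolding psd_iff_psd_kernel psd_kernel_def hermitian_kernel_def
proof (intro conjI allI impI)
  show "bell_proj d \<in> carrier_mat (d * d) (d * d)" unfolding bell_proj_def by simp
  fix i j assume "i < d * d" "j < d * d"
  then show "bell_proj d $$ (i, j) = cnj (bell_proj d $$ (j, i))" unfolding bell_proj_def by simp
next
  fix x
  define s where "s = (\<Sum>i<d * d. cnj (x i) * bell_vec d i)"
  have "quad_form (d * d) (mat_kernel (bell_proj d)) x
      = (\<Sum>i<d * d. \<Sum>j<d * d. cnj (x i) * (bell_vec d i * cnj (bell_vec d j)) * x j)"
    unfolding quad_form_def bell_proj_def by (intro sum.cong refl) simp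
  also have "\<dots> = s * cnj s"
    unfolding s_def cnj_sum sum_product by (intro sum.cong refl) (simp add: mult_ac)
  finally show "Re (quad_form (d * d) (mat_kernel (bell_proj d)) x) \<ge> 0"
    by (simp add: add_nonneg_nonneg)
qed

lemma psd_one_minus_bell_proj:
  assumes "0 < d"
  shows "psd (d * d) (1\<^sub>m (d * d) - bell_proj d)"
  unfolding psd_iff_psd_kernel psd_kernel_def hermitian_kernel_def
proof (intro conjI allI impI)
  show "1\<^sub>m (d * d) - bell_proj d \<in> carrier_mat (d * d) (d * d)"
    by (rule minus_carrier_mat) (simp add: bell_proj_def)
  fix i j assume "i < d * d" "j < d * d"
  then show "(1\<^sub>m (d * d) - bell_proj d) $$ (i, j) = cnj ((1\<^sub>m (d * d) - bell_proj d) $$ (j, i))"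
    unfolding bell_proj_def by simp
next
  fix x
  define s where "s = (\<Sum>i<d * d. cnj (x i) * bell_vec d i)"
  define y where "y = (\<lambda>i. x i - cnj s * bell_vec d i)"
  have cnj_s: "cnj s = (\<Sum>i<d * d. cnj (bell_vec d i) * x i)"
    unfolding s_def cnj_sum by (simp add: mult.commute)
  have "quad_form (d * d) (mat_kernel (1\<^sub>m (d * d) - bell_proj d)) x
      = (\<Sum>i<d * d. \<Sum>j<d * d. (if j = i then cnj (x i) * x j else 0)
           - cnj (x i) * (bell_vec d i * cnj (bell_vec d j)) * x j)"
    unfolding quad_form_def bell_proj_def by (intro sum.cong refl) (auto simp: algebra_simps)
  also have "\<dots> = (\<Sum>i<d * d. cnj (x i) * x i) - s * cnj s"
    unfolding sum_subtractf s_def cnj_sum sum_product by (simp add: mult_ac)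
  also have "\<dots> = (\<Sum>i<d * d. cnj (y i) * y i)"
  proof -
    have "(\<Sum>i<d * d. cnj (y i) * y i) = (\<Sum>i<d * d. cnj (x i) * x i) - cnj s * (\<Sum>i<d * d. cnj (x i) * bell_vec d i)
        - s * (\<Sum>i<d * d. cnj (bell_vec d i) * x i) + s * cnj s * (\<Sum>i<d * d. cnj (bell_vec d i) * bell_vec d i)"
      unfolding y_def by (simp add: algebra_simps sum.distrib sum_subtractf sum_distrib_left)
    then show ?thesis unfolding bell_vec_norm[OF assms] cnj_s[symmetric] s_def[symmetric]
      by (simp add: algebra_simps)
  qed
  finally show "Re (quad_form (d * d) (mat_kernel (1\<^sub>m (d * d) - bell_proj d)) x) \<ge> 0"
    by (simp add: Re_sum add_nonneg_nonneg sum_nonneg)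
qed

lemma povm_bell_povm: "0 < d \<Longrightarrow> povm (d * d) 2 (bell_povm d)"
  unfolding povm_def
proof (intro conjI allI impI)
  fix a assume "0 < d" "a < (2::nat)"
  then show "psd (d * d) (bell_povm d a)"
    unfolding bell_povm_def using psd_bell_proj psd_one_minus_bell_proj by auto
next
  fix i j assume "i < d * d" "j < d * d"
  then show "(\<Sum>a<2. bell_povm d a $$ (i, j)) = (if i = j then 1 else 0)"
    unfolding bell_povm_def bell_proj_def by (simp add: numeral_2_eq_2)
qed

lemma sum_bell_vec:
  fixes g :: "nat \<Rightarrow> complex"
  shows "(\<Sum>K<dA * dA * (dB * dB). bell_vec dA (K div (dB * dB)) * bell_vec dB (K mod (dB * dB)) * g K)
     = complex_of_real (1 / sqrt (real dA)) * complex_of_real (1 / sqrt (real dB))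
       * (\<Sum>a<dA. \<Sum>b<dB. g (joint_index dA dB a a b b))"
proof -
  define c where "c = complex_of_real (1 / sqrt (real dA)) * complex_of_real (1 / sqrt (real dB))"
  have "(\<Sum>K<dA * dA * (dB * dB). bell_vec dA (K div (dB * dB)) * bell_vec dB (K mod (dB * dB)) * g K)
     = (\<Sum>a<dA. \<Sum>ao<dA. \<Sum>b<dB. \<Sum>bo<dB.
          if ao = a then (if bo = b then c * g (joint_index dA dB a a b b) else 0) else 0)"
    unfolding sum_joint_index
    by (intro sum.cong refl) (simp add: joint_index_decode bell_vec_index c_def)
  also have "\<dots> = c * (\<Sum>a<dA. \<Sum>b<dB. g (joint_index dA dB a a b b))"
    by (simp add: sum_if_const sum.delta sum_distrib_left)
  finally show ?thesis unfolding c_def .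
qed

section \<open>The witness game\<close>

text \<open>\<open>witness_kernel v dB i j k l\<close> is the entry at row \<open>(i, k)\<close> and column \<open>(j, l)\<close> of the
  rank-one operator \<open>|conj v\<rangle>\<langle>conj v|\<close> on \<open>A\<^sup>o \<otimes> B\<^sup>o\<close>.\<close>

definition witness_kernel :: "(nat \<Rightarrow> complex) \<Rightarrow> nat \<Rightarrow> nat \<Rightarrow> nat \<Rightarrow> nat \<Rightarrow> nat \<Rightarrow> complex" where
  "witness_kernel v dB i j k l = cnj (v (i * dB + k)) * v (j * dB + l)"

definition witness_weight :: "(nat \<Rightarrow> complex) \<Rightarrow> nat \<Rightarrow> nat \<Rightarrow> nat \<Rightarrow> nat \<Rightarrow> complex" where
  "witness_weight v dA dB s t = probe_weight dA s * probe_weight dB t *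
     witness_kernel v dB (s div 4 div dA) (s div 4 mod dA) (t div 4 div dB) (t div 4 mod dB)"

definition witness_payoff :: "(nat \<Rightarrow> complex) \<Rightarrow> nat \<Rightarrow> nat \<Rightarrow> nat \<Rightarrow> nat \<Rightarrow> nat \<Rightarrow> nat \<Rightarrow> real" where
  "witness_payoff v dA dB s a t b = (if a = 0 \<and> b = 0 then Re (witness_weight v dA dB s t) else 0)"

abbreviation witness_game_payoff ::
  "(nat \<Rightarrow> complex) \<Rightarrow> nat \<Rightarrow> nat \<Rightarrow> (nat \<Rightarrow> complex mat) \<Rightarrow> (nat \<Rightarrow> complex mat) \<Rightarrow> complex mat \<Rightarrow> real" where
  "witness_game_payoff v dA dB M N Z \<equiv> payoff dA dB dA dB (dA * dA * 4) (dB * dB * 4) 2 2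
     (probe_state dA) (probe_state dB) (witness_payoff v dA dB) M N Z"

lemma witness_weight_expansion:
  assumes a: "a < dA" and b: "b < dA" and c: "c < dB" and e: "e < dB"
  shows "(\<Sum>s<dA * dA * 4. \<Sum>t<dB * dB * 4.
      witness_weight v dA dB s t * (probe_state dA s $$ (a, b) * probe_state dB t $$ (c, e)))
    = witness_kernel v dB a b c e"
proof -
  have "(\<Sum>s<dA * dA * 4. \<Sum>t<dB * dB * 4.
      witness_weight v dA dB s t * (probe_state dA s $$ (a, b) * probe_state dB t $$ (c, e)))
    = (\<Sum>s<dA * dA * 4. (\<lambda>i j. witness_kernel v dB i j c e) (s div 4 div dA) (s div 4 mod dA)
        * (probe_weight dA s * probe_state dA s $$ (a, b)))"
  proof (rule sum.cong[OF refl])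
    fix s
    have "(\<Sum>t<dB * dB * 4. witness_weight v dA dB s t * (probe_state dA s $$ (a, b) * probe_state dB t $$ (c, e)))
      = (probe_weight dA s * probe_state dA s $$ (a, b)) *
        (\<Sum>t<dB * dB * 4. (\<lambda>k l. witness_kernel v dB (s div 4 div dA) (s div 4 mod dA) k l)
            (t div 4 div dB) (t div 4 mod dB) * (probe_weight dB t * probe_state dB t $$ (c, e)))"
      unfolding witness_weight_def sum_distrib_left by (intro sum.cong refl) (simp add: mult_ac)
    also have "\<dots> = (probe_weight dA s * probe_state dA s $$ (a, b)) *
        witness_kernel v dB (s div 4 div dA) (s div 4 mod dA) c e"
      by (subst probe_state_expansion[OF c e]) (rule refl)
    finally show "(\<Sum>t<dB * dB * 4. witness_weight v dA dB s t * (probe_state dA s $$ (a, b) * probe_state dB t $$ (c, e)))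
      = (\<lambda>i j. witness_kernel v dB i j c e) (s div 4 div dA) (s div 4 mod dA) * (probe_weight dA s * probe_state dA s $$ (a, b))"
      by (simp add: mult_ac)
  qed
  also have "\<dots> = witness_kernel v dB a b c e" by (rule probe_state_expansion[OF a b])
  finally show ?thesis .
qed

lemma witness_weight_Re_expansion:
  assumes a: "a < dA" and b: "b < dA" and c: "c < dB" and e: "e < dB"
  shows "(\<Sum>s<dA * dA * 4. \<Sum>t<dB * dB * 4. complex_of_real (Re (witness_weight v dA dB s t))
      * (probe_state dA s $$ (a, b) * probe_state dB t $$ (c, e)))
    = witness_kernel v dB a b c e"
proof -
  have Re_eq: "complex_of_real (Re z) = (z + cnj z) / 2" for z by (simp add: complex_eq_iff)
  have "(\<Sum>s<dA * dA * 4. \<Sum>t<dB * dB * 4.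
        cnj (witness_weight v dA dB s t) * (probe_state dA s $$ (a, b) * probe_state dB t $$ (c, e)))
     = cnj (\<Sum>s<dA * dA * 4. \<Sum>t<dB * dB * 4.
        witness_weight v dA dB s t * (probe_state dA s $$ (b, a) * probe_state dB t $$ (e, c)))"
    unfolding cnj_sum complex_cnj_mult cnj_probe_state[OF b a] cnj_probe_state[OF e c] ..
  also have "\<dots> = cnj (witness_kernel v dB b a e c)" unfolding witness_weight_expansion[OF b a e c] ..
  also have "\<dots> = witness_kernel v dB a b c e" unfolding witness_kernel_def by (simp add: mult.commute)
  finally show ?thesis
    unfolding Re_eq using witness_weight_expansion[OF a b c e]
    by (simp add: add_divide_distrib sum.distrib distrib_right sum_divide_distrib[symmetric])
qed

lemma sum_swap_nested:
  "(\<Sum>s\<in>A. \<Sum>t\<in>B. \<Sum>K\<in>C. \<Sum>L\<in>E. f s t K L) = (\<Sum>K\<in>C. \<Sum>L\<in>E. \<Sum>s\<in>A. \<Sum>t\<in>B. (f s t K L :: 'a::comm_monoid_add))"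
proof -
  have "(\<Sum>s\<in>A. \<Sum>t\<in>B. \<Sum>K\<in>C. \<Sum>L\<in>E. f s t K L) = (\<Sum>s\<in>A. \<Sum>K\<in>C. \<Sum>t\<in>B. \<Sum>L\<in>E. f s t K L)"
    by (rule sum.cong[OF refl], rule sum.swap)
  also have "\<dots> = (\<Sum>K\<in>C. \<Sum>s\<in>A. \<Sum>t\<in>B. \<Sum>L\<in>E. f s t K L)" by (rule sum.swap)
  also have "\<dots> = (\<Sum>K\<in>C. \<Sum>s\<in>A. \<Sum>L\<in>E. \<Sum>t\<in>B. f s t K L)"
    by (intro sum.cong refl, rule sum.swap)
  also have "\<dots> = (\<Sum>K\<in>C. \<Sum>L\<in>E. \<Sum>s\<in>A. \<Sum>t\<in>B. f s t K L)"
    by (intro sum.cong refl, rule sum.swap)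
  finally show ?thesis .
qed

text \<open>By linearity the weighted inputs add up to \<open>|conj v\<rangle>\<langle>conj v|\<close>; only the first POVM
  elements enter.\<close>

lemma witness_game_payoff_coords:
  assumes A: "M 0 \<in> carrier_mat (dA * dA) (dA * dA)" and B: "N 0 \<in> carrier_mat (dB * dB) (dB * dB)"
    and dA: "0 < dA" and dB: "0 < dB"
  shows "witness_game_payoff v dA dB M N Z
    = Re (\<Sum>K<dA * dA * (dB * dB). \<Sum>L<dA * dA * (dB * dB).
       (M 0 $$ (K div (dB * dB), L div (dB * dB)) * N 0 $$ (K mod (dB * dB), L mod (dB * dB))) *
       (Z $$ (ab_index dA dB L, ab_index dA dB K) *
        witness_kernel v dB (ao_index dA dB L) (ao_index dA dB K) (bo_index dB L) (bo_index dB K)))"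
proof -
  define D where "D = dA * dA * (dB * dB)"
  define X where "X = (\<lambda>K L. M 0 $$ (K div (dB * dB), L div (dB * dB)) * N 0 $$ (K mod (dB * dB), L mod (dB * dB)))"
  define Y where "Y = (\<lambda>s t K L. Z $$ (ab_index dA dB L, ab_index dA dB K) *
    probe_state dA s $$ (ao_index dA dB L, ao_index dA dB K) * probe_state dB t $$ (bo_index dB L, bo_index dB K))"
  define w where "w = (\<lambda>s t. complex_of_real (Re (witness_weight v dA dB s t)))"
  have "witness_game_payoff v dA dB M N Z
     = (\<Sum>s<dA * dA * 4. \<Sum>t<dB * dB * 4.
         Re (witness_weight v dA dB s t) * correlation dA dA dB dB (M 0) (N 0) (probe_state dA s) Z (probe_state dB t))"
    unfolding payoff_def witness_payoff_def by (simp add: numeral_2_eq_2)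
  also have "\<dots> = Re (\<Sum>s<dA * dA * 4. \<Sum>t<dB * dB * 4. \<Sum>K<D. \<Sum>L<D. w s t * (X K L * Y s t K L))"
    unfolding correlation_coords[OF A B] X_def Y_def D_def w_def by (simp add: sum_distrib_left Re_sum)
  also have "\<dots> = Re (\<Sum>K<D. \<Sum>L<D. \<Sum>s<dA * dA * 4. \<Sum>t<dB * dB * 4. w s t * (X K L * Y s t K L))"
    by (rule arg_cong[where f = Re], rule sum_swap_nested)
  also have "\<dots> = Re (\<Sum>K<D. \<Sum>L<D. X K L * (Z $$ (ab_index dA dB L, ab_index dA dB K) *
      witness_kernel v dB (ao_index dA dB L) (ao_index dA dB K) (bo_index dB L) (bo_index dB K)))"
  proof (intro arg_cong[where f = Re] sum.cong refl)
    fix K L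
    have ao: "ao_index dA dB L < dA" "ao_index dA dB K < dA" unfolding ao_index_def using dA by simp_all
    have bo: "bo_index dB L < dB" "bo_index dB K < dB" unfolding bo_index_def using dB by simp_all
    have "(\<Sum>s<dA * dA * 4. \<Sum>t<dB * dB * 4. w s t * (X K L * Y s t K L))
      = X K L * Z $$ (ab_index dA dB L, ab_index dA dB K) * (\<Sum>s<dA * dA * 4. \<Sum>t<dB * dB * 4. w s t *
          (probe_state dA s $$ (ao_index dA dB L, ao_index dA dB K) * probe_state dB t $$ (bo_index dB L, bo_index dB K)))"
      unfolding Y_def sum_distrib_left by (intro sum.cong refl) (simp add: mult_ac)
    also have "\<dots> = X K L * Z $$ (ab_index dA dB L, ab_index dA dB K) *
        witness_kernel v dB (ao_index dA dB L) (ao_index dA dB K) (bo_index dB L) (bo_index dB K)"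
      unfolding w_def witness_weight_Re_expansion[OF ao bo] ..
    finally show "(\<Sum>s<dA * dA * 4. \<Sum>t<dB * dB * 4. w s t * (X K L * Y s t K L))
      = X K L * (Z $$ (ab_index dA dB L, ab_index dA dB K) *
          witness_kernel v dB (ao_index dA dB L) (ao_index dA dB K) (bo_index dB L) (bo_index dB K))"
      by (simp add: mult_ac)
  qed
  finally show ?thesis unfolding X_def D_def .
qed

text \<open>For quantum states, the coordinate expression is the trace of a product of two positive
  operators: \<open>M\<^sub>0 \<otimes> N\<^sub>0\<close> and, up to reordering of tensor factors, \<open>\<rho> \<otimes> |conj v\<rangle>\<langle>conj v|\<close>.\<close>

lemma witness_game_payoff_density_nonneg:
  assumes rho: "density (dA * dB) \<rho>" and M: "povm (dA * dA) 2 M" and N: "povm (dB * dB) 2 N"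
    and dA: "0 < dA" and dB: "0 < dB"
  shows "witness_game_payoff v dA dB M N \<rho> \<ge> 0"
proof -
  define D where "D = dA * dA * (dB * dB)"
  have "psd (dA * dA) (M 0)" using M unfolding povm_def by simp
  then have M0: "M 0 \<in> carrier_mat (dA * dA) (dA * dA)" "psd_kernel (dA * dA) (mat_kernel (M 0))"
    unfolding psd_iff_psd_kernel by blast+
  have "psd (dB * dB) (N 0)" using N unfolding povm_def by simp
  then have N0: "N 0 \<in> carrier_mat (dB * dB) (dB * dB)" "psd_kernel (dB * dB) (mat_kernel (N 0))"
    unfolding psd_iff_psd_kernel by blast+
  have "psd (dA * dB) \<rho>" using rho unfolding density_def by simp
  then have R: "psd_kernel (dA * dB) (mat_kernel \<rho>)"
    unfolding psd_iff_psd_kernel by blast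
  obtain N1 :: nat and \<alpha> where \<alpha>: "\<And>i j. i < dA * dA \<Longrightarrow> j < dA * dA \<Longrightarrow> M 0 $$ (i, j) = (\<Sum>m<N1. \<alpha> m i * cnj (\<alpha> m j))"
    by (rule psd_kernel_gram[OF M0(2)], rule that)
  obtain N2 :: nat and \<beta> where \<beta>: "\<And>i j. i < dB * dB \<Longrightarrow> j < dB * dB \<Longrightarrow> N 0 $$ (i, j) = (\<Sum>m<N2. \<beta> m i * cnj (\<beta> m j))"
    by (rule psd_kernel_gram[OF N0(2)], rule that)
  obtain N3 :: nat and y where y: "\<And>i j. i < dA * dB \<Longrightarrow> j < dA * dB \<Longrightarrow> \<rho> $$ (i, j) = (\<Sum>m<N3. y m i * cnj (y m j))"
    by (rule psd_kernel_gram[OF R], rule that)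
  define u where "u = (\<lambda>(p, q) K. \<alpha> p (K div (dB * dB)) * \<beta> q (K mod (dB * dB)))"
  define z where "z = (\<lambda>m L. y m (ab_index dA dB L) * cnj (v (ao_index dA dB L * dB + bo_index dB L)))"
  have P: "M 0 $$ (K div (dB * dB), L div (dB * dB)) * N 0 $$ (K mod (dB * dB), L mod (dB * dB))
      = (\<Sum>pq\<in>{..<N1} \<times> {..<N2}. u pq K * cnj (u pq L))" if "K < D" "L < D" for K L
  proof -
    have div: "K div (dB * dB) < dA * dA" "L div (dB * dB) < dA * dA"
      using that dB unfolding D_def by (simp_all add: less_mult_imp_div_less)
    have mod: "K mod (dB * dB) < dB * dB" "L mod (dB * dB) < dB * dB" using dB by simp_all
    show ?thesis unfolding \<alpha>[OF div] \<beta>[OF mod] sum_product sum.cartesian_product u_def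
      by (intro sum.cong refl) (auto simp: mult_ac)
  qed
  have Q: "\<rho> $$ (ab_index dA dB L, ab_index dA dB K) *
      witness_kernel v dB (ao_index dA dB L) (ao_index dA dB K) (bo_index dB L) (bo_index dB K)
      = (\<Sum>m<N3. z m L * cnj (z m K))" if "L < D" "K < D" for K L
  proof -
    have ab: "ab_index dA dB L < dA * dB" "ab_index dA dB K < dA * dB"
      unfolding ab_index_def using that dA dB unfolding D_def
      by (auto intro!: mult_add_less simp: less_mult_imp_div_less)
    show ?thesis
      unfolding y[OF ab] z_def witness_kernel_def sum_distrib_right by (intro sum.cong refl) (simp add: mult_ac)
  qed
  show ?thesis
    unfolding witness_game_payoff_coords[where M = M and N = N, OF M0(1) N0(1) dA dB] D_def[symmetric]
    by (rule trace_gram_product_nonneg[where I = "{..<N1} \<times> {..<N2}" and J = "{..<N3}" and u = u and z = z])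
      (use P Q in auto)
qed

lemma witness_game_payoff_bell:
  assumes dA: "0 < dA" and dB: "0 < dB"
  shows "witness_game_payoff v dA dB (bell_povm dA) (bell_povm dB) Z
    = Re (quad_form (dA * dB) (mat_kernel Z) v) / (real dA * real dB)"
proof -
  define D where "D = dA * dA * (dB * dB)"
  define T where "T = (\<lambda>L K. Z $$ (ab_index dA dB L, ab_index dA dB K) *
    witness_kernel v dB (ao_index dA dB L) (ao_index dA dB K) (bo_index dB L) (bo_index dB K))"
  define c where "c = complex_of_real (1 / sqrt (real dA)) * complex_of_real (1 / sqrt (real dB))"
  define w where "w = (\<lambda>K. bell_vec dA (K div (dB * dB)) * bell_vec dB (K mod (dB * dB)))"
  have "bell_povm dA 0 \<in> carrier_mat (dA * dA) (dA * dA)" "bell_povm dB 0 \<in> carrier_mat (dB * dB) (dB * dB)"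
    unfolding bell_povm_def bell_proj_def by simp_all
  then have "witness_game_payoff v dA dB (bell_povm dA) (bell_povm dB) Z
      = Re (\<Sum>K<D. \<Sum>L<D. (bell_povm dA 0 $$ (K div (dB * dB), L div (dB * dB))
          * bell_povm dB 0 $$ (K mod (dB * dB), L mod (dB * dB))) * T L K)"
    unfolding D_def T_def by (rule witness_game_payoff_coords[OF _ _ dA dB])
  also have "(\<Sum>K<D. \<Sum>L<D. (bell_povm dA 0 $$ (K div (dB * dB), L div (dB * dB))
          * bell_povm dB 0 $$ (K mod (dB * dB), L mod (dB * dB))) * T L K)
      = (\<Sum>K<D. w K * (\<Sum>L<D. w L * T L K))"
    unfolding sum_distrib_left
  proof (intro sum.cong refl)
    fix K L assume "K \<in> {..<D}" "L \<in> {..<D}"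
    then have "K div (dB * dB) < dA * dA" "L div (dB * dB) < dA * dA"
      "K mod (dB * dB) < dB * dB" "L mod (dB * dB) < dB * dB"
      using dB unfolding D_def by (simp_all add: less_mult_imp_div_less)
    then show "bell_povm dA 0 $$ (K div (dB * dB), L div (dB * dB))
          * bell_povm dB 0 $$ (K mod (dB * dB), L mod (dB * dB)) * T L K = w K * (w L * T L K)"
      unfolding w_def by (simp add: bell_povm_0_index mult_ac)
  qed
  also have "\<dots> = (c * c) * (\<Sum>a<dA. \<Sum>b<dB. \<Sum>a'<dA. \<Sum>b'<dB.
      T (joint_index dA dB a' a' b' b') (joint_index dA dB a a b b))"
    unfolding w_def D_def sum_bell_vec c_def[symmetric] by (simp add: sum_distrib_left mult_ac)
  also have "(\<Sum>a<dA. \<Sum>b<dB. \<Sum>a'<dA. \<Sum>b'<dB. T (joint_index dA dB a' a' b' b') (joint_index dA dB a a b b))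
     = (\<Sum>a<dA. \<Sum>b<dB. \<Sum>a'<dA. \<Sum>b'<dB. cnj (v (a' * dB + b')) * Z $$ (a' * dB + b', a * dB + b) * v (a * dB + b))"
    by (intro sum.cong refl) (simp add: T_def joint_index_decode witness_kernel_def mult_ac)
  also have "\<dots> = quad_form (dA * dB) (mat_kernel Z) v"
    unfolding quad_form_def by (subst sum.swap) (simp only: sum_lessThan_mult)
  also have "c * c = complex_of_real (1 / (real dA * real dB))"
    unfolding c_def using dA dB by (simp flip: of_real_mult add: real_sqrt_mult[symmetric])
  finally show ?thesis by simp
qed

theorem theorem1:
  fixes dA dB :: nat and W :: "complex mat"
  assumes "popt dA dB W" and "\<not> density (dA * dB) W"
  shows "\<exists>dAo dBo nSA nSB nOA nOB psiA psiB beta M N.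
     semiquantum_game dAo dBo nSA nSB psiA psiB \<and>
     povm (dA * dAo) nOA M \<and> povm (dB * dBo) nOB N \<and>
     payoff dA dB dAo dBo nSA nSB nOA nOB psiA psiB beta M N W < 0 \<and>
     (\<forall>\<rho> M' N'. density (dA * dB) \<rho> \<longrightarrow> povm (dA * dAo) nOA M' \<longrightarrow> povm (dB * dBo) nOB N' \<longrightarrow>
        payoff dA dB dAo dBo nSA nSB nOA nOB psiA psiB beta M' N' \<rho> \<ge> 0)"
proof -
  have W: "hermitian (dA * dB) W" "mtrace W = 1" using assms(1) unfolding popt_def by auto
  then have dim: "dim_row W = dA * dB" unfolding hermitian_def by auto
  have "dA * dB \<noteq> 0"
  proof
    assume "dA * dB = 0"
    with dim have "mtrace W = 0" unfolding mtrace_def by simp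
    with W(2) show False by simp
  qed
  then have dA: "0 < dA" and dB: "0 < dB" by auto
  obtain v where "Re (quad_form (dA * dB) (mat_kernel W) v) < 0"
    using not_density_imp_negative_direction[OF W assms(2)] .
  then have "witness_game_payoff v dA dB (bell_povm dA) (bell_povm dB) W < 0"
    using dA dB by (simp add: witness_game_payoff_bell divide_neg_pos)
  moreover have "semiquantum_game dA dB (dA * dA * 4) (dB * dB * 4) (probe_state dA) (probe_state dB)"
    unfolding semiquantum_game_def using pure_state_probe_state by blast
  ultimately show ?thesis
    using povm_bell_povm[OF dA] povm_bell_povm[OF dB] witness_game_payoff_density_nonneg[OF _ _ _ dA dB]
    by blast
qed

end
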